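(* For every integer $n\ge1$, $|A_n|\le 0.21\,(3/4)^n$ and $|B_n|\le 0.85\,(3/4)^n$.
   Context: Let $x_0=-\tfrac{770766}{323285}$ and let $a_0=-x_0/10$, $a_1=-1/6$, $a_2=\tfrac{19949}{321055}$, $a_3=0$, $a_n=-\tfrac{6}{(n+5)(n-2)}\sum_{k=0}^{n-4}a_ka_{n-4-k}$ for $4\le n\le 17$. Define $A_0=1$, $A_1=A_2=A_3=0$, and $A_n=-\tfrac{12}{n(n+7)}\sum_{k=0}^{\min\{n-4,17\}}a_kA_{n-4-k}$ for $n\ge4$; define $B_0=1$, $B_1=B_2=B_3=B_7=0$, and $B_n=-\tfrac{12}{n(n-7)}\sum_{k=0}^{\min\{n-4,17\}}a_kB_{n-4-k}$ for $n\ge4$, $n\ne7$. *)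

theory Defs
  imports Complex_Main
begin

definition x0 :: real where "x0 = - 770766 / 323285"

function acoef :: "nat \<Rightarrow> real" where
  "acoef n = (if n = 0 then - x0 / 10
     else if n = 1 then - 1 / 6
     else if n = 2 then 19949 / 321055
     else if n = 3 then 0
     else if n \<le> 17 then
       - 6 / (real (n + 5) * (real n - 2)) * (\<Sum>k = 0..n - 4. acoef k * acoef (n - 4 - k))
     else 0)"
  by auto
termination by (relation "measure id") auto

function Acoef :: "nat \<Rightarrow> real" where
  "Acoef n = (if n = 0 then 1
     else if n < 4 then 0
     else - 12 / (real n * real (n + 7)) *
       (\<Sum>k = 0..min (n - 4) 17. acoef k * Acoef (n - 4 - k)))"
  by auto
termination by (relation "measure id") auto

function Bcoef :: "nat \<Rightarrow> real" where
  "Bcoef n = (if n = 0 then 1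
     else if n < 4 \<or> n = 7 then 0
     else - 12 / (real n * (real n - 7)) *
       (\<Sum>k = 0..min (n - 4) 17. acoef k * Bcoef (n - 4 - k)))"
  by auto
termination by (relation "measure id") auto

end

theory Submission
  imports Defs
begin

text \<open>
  For \<open>n \<ge> 22\<close> the recurrences for \<open>A\<^sub>n\<close> and \<open>B\<^sub>n\<close> involve all eighteen
  coefficients \<open>a\<^sub>0, \<dots>, a\<^sub>17\<close>, and since \<open>\<Sum>\<^sub>k |a\<^sub>k| (4/3)\<^bsup>k+4\<^esup> \<le> 3\<close> while the
  multipliers \<open>12/(n(n+7))\<close> and \<open>12/(n(n-7))\<close> are at most \<open>1/3\<close> there, a bound
  \<open>c (3/4)\<^sup>m\<close> for all earlier indices \<open>m \<ge> 1\<close> propagates to index \<open>n\<close>.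
  The bounds for \<open>1 \<le> n \<le> 21\<close>, where \<open>A\<^sub>0 = B\<^sub>0 = 1\<close> still enters the recurrence,
  are checked on the exact rational values.
\<close>

lemma convolution_geometric_bound:
  fixes F a :: "nat \<Rightarrow> real" and c r :: real
  assumes "r > 0" and "K + 5 \<le> n"
    and bound: "\<And>m. 1 \<le> m \<Longrightarrow> m < n \<Longrightarrow> \<bar>F m\<bar> \<le> c * r ^ m"
  shows "\<bar>\<Sum>k = 0..K. a k * F (n - 4 - k)\<bar> \<le> c * r ^ n * (\<Sum>k = 0..K. \<bar>a k\<bar> / r ^ (k + 4))"
proof -
  have term_bound: "\<bar>a k * F (n - 4 - k)\<bar> \<le> c * r ^ n * (\<bar>a k\<bar> / r ^ (k + 4))"
    if "k \<in> {0..K}" for k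
  proof -
    have "k + 4 \<le> n" "n - 4 - k = n - (k + 4)" using that \<open>K + 5 \<le> n\<close> by auto
    then have "r ^ (n - 4 - k) = r ^ n / r ^ (k + 4)"
      using \<open>r > 0\<close> by (simp add: power_diff)
    moreover have "\<bar>F (n - 4 - k)\<bar> \<le> c * r ^ (n - 4 - k)"
      using that \<open>K + 5 \<le> n\<close> by (intro bound) auto
    ultimately have "\<bar>a k\<bar> * \<bar>F (n - 4 - k)\<bar> \<le> \<bar>a k\<bar> * (c * (r ^ n / r ^ (k + 4)))"
      by (intro mult_left_mono) simp_all
    then show ?thesis by (simp add: abs_mult mult.commute mult.left_commute)
  qed
  have "\<bar>\<Sum>k = 0..K. a k * F (n - 4 - k)\<bar> \<le> (\<Sum>k = 0..K. \<bar>a k * F (n - 4 - k)\<bar>)"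
    by (rule sum_abs)
  also have "\<dots> \<le> (\<Sum>k = 0..K. c * r ^ n * (\<bar>a k\<bar> / r ^ (k + 4)))"
    by (rule sum_mono) (rule term_bound)
  also have "\<dots> = c * r ^ n * (\<Sum>k = 0..K. \<bar>a k\<bar> / r ^ (k + 4))"
    by (simp add: sum_distrib_left)
  finally show ?thesis .
qed

lemma convolution_recurrence_geometric_bound:
  fixes F a \<mu> :: "nat \<Rightarrow> real" and c r :: real
  assumes "r > 0" and "c \<ge> 0" and "K + 5 \<le> N"
    and initial: "\<And>n. 1 \<le> n \<Longrightarrow> n < N \<Longrightarrow> \<bar>F n\<bar> \<le> c * r ^ n"
    and recurrence: "\<And>n. N \<le> n \<Longrightarrow> F n = \<mu> n * (\<Sum>k = 0..K. a k * F (n - 4 - k))"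
    and small: "\<And>n. N \<le> n \<Longrightarrow> \<bar>\<mu> n\<bar> * (\<Sum>k = 0..K. \<bar>a k\<bar> / r ^ (k + 4)) \<le> 1"
    and "1 \<le> n"
  shows "\<bar>F n\<bar> \<le> c * r ^ n"
  using \<open>1 \<le> n\<close>
proof (induction n rule: less_induct)
  case (less n)
  show ?case
  proof (cases "n < N")
    case True
    then show ?thesis using initial less.prems by blast
  next
    case False
    let ?S = "\<Sum>k = 0..K. \<bar>a k\<bar> / r ^ (k + 4)"
    have "\<bar>\<Sum>k = 0..K. a k * F (n - 4 - k)\<bar> \<le> c * r ^ n * ?S"
      using False \<open>K + 5 \<le> N\<close> \<open>r > 0\<close> less.IH
      by (intro convolution_geometric_bound) auto
    then have "\<bar>F n\<bar> \<le> \<bar>\<mu> n\<bar> * (c * r ^ n * ?S)"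
      using False by (simp add: recurrence abs_mult mult_left_mono)
    also have "\<dots> = (\<bar>\<mu> n\<bar> * ?S) * (c * r ^ n)"
      by (simp only: ac_simps)
    also have "\<dots> \<le> c * r ^ n"
      using False small \<open>c \<ge> 0\<close> \<open>r > 0\<close>
      by (intro mult_left_le_one_le mult_nonneg_nonneg sum_nonneg) auto
    finally show ?thesis .
  qed
qed

lemma sum_atLeast0_numeral:
  "sum f {0..numeral k} = f (numeral k) + sum f {0..pred_numeral k}"
  by (simp add: numeral_eq_Suc add.commute)

declare acoef.simps [simp del] Acoef.simps [simp del] Bcoef.simps [simp del]

lemma acoef_0 [simp]: "acoef 0 = 385383 / 1616425"
  by (subst acoef.simps) (simp add: x0_def)

lemma acoef_1 [simp]: "acoef 1 = - (1 / 6)"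
  by (subst acoef.simps) (simp add: sum_atLeast0_numeral)

text \<open>Evaluating the indices \<open>n - 4 - k\<close> can produce \<open>Suc 0\<close> rather than \<open>1\<close>.\<close>

lemma acoef_Suc_0 [simp]: "acoef (Suc 0) = - (1 / 6)"
  using acoef_1 by simp

lemma acoef_2 [simp]: "acoef 2 = 19949 / 321055"
  by (subst acoef.simps) (simp add: sum_atLeast0_numeral)

lemma acoef_3 [simp]: "acoef 3 = 0"
  by (subst acoef.simps) (simp add: sum_atLeast0_numeral)

lemma acoef_4 [simp]: "acoef 4 = - (49506685563 / 2612829780625)"
  by (subst acoef.simps) (simp add: sum_atLeast0_numeral)

lemma acoef_5 [simp]: "acoef 5 = 128461 / 8082125"
  by (subst acoef.simps) (simp add: sum_atLeast0_numeral)

lemma acoef_6 [simp]: "acoef 6 = - (97499792909 / 12455071881000)"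
  by (subst acoef.simps) (simp add: sum_atLeast0_numeral)

lemma acoef_7 [simp]: "acoef 7 = 19949 / 9631650"
  by (subst acoef.simps) (simp add: sum_atLeast0_numeral)

lemma acoef_8 [simp]: "acoef 8 = 90096826251431314708225793 / 226375225278394118135981078125"
  by (subst acoef.simps) (simp add: sum_atLeast0_numeral)

lemma acoef_9 [simp]: "acoef 9 = - (544573541193 / 640143296253125)"
  by (subst acoef.simps) (simp add: sum_atLeast0_numeral)

lemma acoef_10 [simp]: "acoef 10 = 22922081708252947 / 40265379130490850000"
  by (subst acoef.simps) (simp add: sum_atLeast0_numeral)

lemma acoef_11 [simp]: "acoef 11 = - (1041035358169 / 4483825877160000)"
  by (subst acoef.simps) (simp add: sum_atLeast0_numeral)

lemma acoef_12 [simp]: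
  "acoef 12 = 587214351327162310761262272254561 / 14929477799641631066244491139694687500"
  by (subst acoef.simps) (simp add: sum_atLeast0_numeral)

lemma acoef_13 [simp]: "acoef 13 = 17538965929177365277646812 / 655296704753246131446261015625"
  by (subst acoef.simps) (simp add: sum_atLeast0_numeral)

lemma acoef_14 [simp]:
  "acoef 14 = - (670831429508462862216520285639237 / 22094384977333466373836811131376250000)"
  by (subst acoef.simps) (simp add: sum_atLeast0_numeral)

lemma acoef_15 [simp]: "acoef 15 = 1736688746159642627 / 102596186024490685800000"
  by (subst acoef.simps) (simp add: sum_atLeast0_numeral)

lemma acoef_16 [simp]:
  "acoef 16 = - (519267392915250281694463921122899387124577 / 91220400755640034815841071012018124215468750000)"
  by (subst acoef.simps) (simp add: sum_atLeast0_numeral)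

lemma acoef_17 [simp]:
  "acoef 17 = 197922898847086344857290544484657263 / 650328052952389449245610034045100587500000"
  by (subst acoef.simps) (simp add: sum_atLeast0_numeral)


lemma Acoef_0 [simp]: "Acoef 0 = 1"
  by (subst Acoef.simps) (simp add: sum_atLeast0_numeral)

lemma Acoef_1 [simp]: "Acoef 1 = 0"
  by (subst Acoef.simps) (simp add: sum_atLeast0_numeral)

lemma Acoef_Suc_0 [simp]: "Acoef (Suc 0) = 0"
  using Acoef_1 by simp

lemma Acoef_2 [simp]: "Acoef 2 = 0"
  by (subst Acoef.simps) (simp add: sum_atLeast0_numeral)

lemma Acoef_3 [simp]: "Acoef 3 = 0"
  by (subst Acoef.simps) (simp add: sum_atLeast0_numeral)

lemma Acoef_4 [simp]: "Acoef 4 = - (1156149 / 17780675)"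
  by (subst Acoef.simps) (simp add: sum_atLeast0_numeral)

lemma Acoef_5 [simp]: "Acoef 5 = 1 / 30"
  by (subst Acoef.simps) (simp add: sum_atLeast0_numeral)

lemma Acoef_6 [simp]: "Acoef 6 = - (39898 / 4173715)"
  by (subst Acoef.simps) (simp add: sum_atLeast0_numeral)

lemma Acoef_7 [simp]: "Acoef 7 = 0"
  by (subst Acoef.simps) (simp add: sum_atLeast0_numeral)

lemma Acoef_8 [simp]: "Acoef 8 = 99013371126 / 28741127586875"
  by (subst Acoef.simps) (simp add: sum_atLeast0_numeral)

lemma Acoef_9 [simp]: "Acoef 9 = - (256922 / 88903375)"
  by (subst Acoef.simps) (simp add: sum_atLeast0_numeral)

lemma Acoef_10 [simp]: "Acoef 10 = 4211108766083 / 3027827974271100"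
  by (subst Acoef.simps) (simp add: sum_atLeast0_numeral)

lemma Acoef_11 [simp]: "Acoef 11 = - (79796 / 229554325)"
  by (subst Acoef.simps) (simp add: sum_atLeast0_numeral)

lemma Acoef_12 [simp]:
  "Acoef 12 = - (4625136396953537821110026058 / 47312422083184370690420045328125)"
  by (subst Acoef.simps) (simp add: sum_atLeast0_numeral)

lemma Acoef_13 [simp]: "Acoef 13 = 6386362437627 / 36616196545678750"
  by (subst Acoef.simps) (simp add: sum_atLeast0_numeral)

lemma Acoef_14 [simp]: "Acoef 14 = - (7877017633650459233 / 68519595666356279445000)"
  by (subst Acoef.simps) (simp add: sum_atLeast0_numeral)

lemma Acoef_15 [simp]: "Acoef 15 = 50496442407137 / 1090018070737596000"
  by (subst Acoef.simps) (simp add: sum_atLeast0_numeral)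

lemma Acoef_16 [simp]:
  "Acoef 16 = - (178103694194663331107316628824406729 / 25630714208170471619799024610182986718750)"
  by (subst Acoef.simps) (simp add: sum_atLeast0_numeral)

lemma Acoef_17 [simp]:
  "Acoef 17 = - (26180020111704468732088174197 / 4021555877070671508685703852890625)"
  by (subst Acoef.simps) (simp add: sum_atLeast0_numeral)

lemma Acoef_18 [simp]:
  "Acoef 18 = 425369590878259945552378762956507 / 61035738499883700857724190750426890625"
  by (subst Acoef.simps) (simp add: sum_atLeast0_numeral)

lemma Acoef_19 [simp]: "Acoef 19 = - (1521645742924447558531 / 394901269690433357201350000)"
  by (subst Acoef.simps) (simp add: sum_atLeast0_numeral)

lemma Acoef_20 [simp]:
  "Acoef 20 = 98962219557312803810521212152801342452749257 / 77954927365753181752844093929737088551779250000000"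
  by (subst Acoef.simps) (simp add: sum_atLeast0_numeral)

lemma Acoef_21 [simp]:
  "Acoef 21 = - (28002770843700773470553181256594409089 / 1105196396656310736245733941191090387312500000)"
  by (subst Acoef.simps) (simp add: sum_atLeast0_numeral)


lemma Bcoef_0 [simp]: "Bcoef 0 = 1"
  by (subst Bcoef.simps) (simp add: sum_atLeast0_numeral)

lemma Bcoef_1 [simp]: "Bcoef 1 = 0"
  by (subst Bcoef.simps) (simp add: sum_atLeast0_numeral)

lemma Bcoef_Suc_0 [simp]: "Bcoef (Suc 0) = 0"
  using Bcoef_1 by simp

lemma Bcoef_2 [simp]: "Bcoef 2 = 0"
  by (subst Bcoef.simps) (simp add: sum_atLeast0_numeral)

lemma Bcoef_3 [simp]: "Bcoef 3 = 0"
  by (subst Bcoef.simps) (simp add: sum_atLeast0_numeral)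

lemma Bcoef_4 [simp]: "Bcoef 4 = 385383 / 1616425"
  by (subst Bcoef.simps) (simp add: sum_atLeast0_numeral)

lemma Bcoef_5 [simp]: "Bcoef 5 = - (1 / 5)"
  by (subst Bcoef.simps) (simp add: sum_atLeast0_numeral)

lemma Bcoef_6 [simp]: "Bcoef 6 = 39898 / 321055"
  by (subst Bcoef.simps) (simp add: sum_atLeast0_numeral)

lemma Bcoef_7 [simp]: "Bcoef 7 = 0"
  by (subst Bcoef.simps) (simp add: sum_atLeast0_numeral)

lemma Bcoef_8 [simp]: "Bcoef 8 = - (148520056689 / 2612829780625)"
  by (subst Bcoef.simps) (simp add: sum_atLeast0_numeral)

lemma Bcoef_9 [simp]: "Bcoef 9 = 385383 / 8082125"
  by (subst Bcoef.simps) (simp add: sum_atLeast0_numeral)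

lemma Bcoef_10 [simp]: "Bcoef 10 = - (58080377561 / 2075845313500)"
  by (subst Bcoef.simps) (simp add: sum_atLeast0_numeral)

lemma Bcoef_11 [simp]: "Bcoef 11 = 59847 / 7063210"
  by (subst Bcoef.simps) (simp add: sum_atLeast0_numeral)

lemma Bcoef_12 [simp]: "Bcoef 12 = 90096826251431314708225793 / 45275045055678823627196215625"
  by (subst Bcoef.simps) (simp add: sum_atLeast0_numeral)

lemma Bcoef_13 [simp]: "Bcoef 13 = - (35298266806419 / 8321862851290625)"
  by (subst Bcoef.simps) (simp add: sum_atLeast0_numeral)

lemma Bcoef_14 [simp]: "Bcoef 14 = 143692761597812009 / 46976275652239325000"
  by (subst Bcoef.simps) (simp add: sum_atLeast0_numeral)

lemma Bcoef_15 [simp]: "Bcoef 15 = - (132662981510393 / 98644169297520000)"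
  by (subst Bcoef.simps) (simp add: sum_atLeast0_numeral)

lemma Bcoef_16 [simp]:
  "Bcoef 16 = 265517965632035667411880944185901 / 1117171808136448583188363282562187500"
  by (subst Bcoef.simps) (simp add: sum_atLeast0_numeral)

lemma Bcoef_17 [simp]: "Bcoef 17 = 1566803839421841981067679898 / 8466433425411940018285692321875"
  by (subst Bcoef.simps) (simp add: sum_atLeast0_numeral)

lemma Bcoef_18 [simp]:
  "Bcoef 18 = - (3330579293236432939105859073744586 / 15189889671916758132012807652821171875)"
  by (subst Bcoef.simps) (simp add: sum_atLeast0_numeral)

lemma Bcoef_19 [simp]: "Bcoef 19 = 27630060029148815277667 / 214426028791185533322000000"
  by (subst Bcoef.simps) (simp add: sum_atLeast0_numeral)

lemma Bcoef_20 [simp]: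
  "Bcoef 20 = - (81004092840052338435903308988363079251034927 / 1783865614776960680843114277568354429102500000000)"
  by (subst Bcoef.simps) (simp add: sum_atLeast0_numeral)

lemma Bcoef_21 [simp]:
  "Bcoef 21 = 20079848652633752895821194581212683721 / 9104592741333452289438540476631408225000000"
  by (subst Bcoef.simps) (simp add: sum_atLeast0_numeral)

lemma acoef_weighted_sum: "(\<Sum>k = 0..17. \<bar>acoef k\<bar> / (3 / 4) ^ (k + 4)) \<le> 3"
  by (simp add: sum_atLeast0_numeral power_divide)

lemma acoef_multiplier_small:
  assumes "36 \<le> d"
  shows "\<bar>- 12 / d\<bar> * (\<Sum>k = 0..17. \<bar>acoef k\<bar> / (3 / 4) ^ (k + 4)) \<le> 1"
proof -
  have "\<bar>- 12 / d\<bar> * (\<Sum>k = 0..17. \<bar>acoef k\<bar> / (3 / 4) ^ (k + 4)) \<le> 12 / d * 3"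
    using acoef_weighted_sum assms by (intro mult_mono sum_nonneg) auto
  also have "\<dots> \<le> 1"
    using assms by (simp add: field_simps)
  finally show ?thesis .
qed

lemma Acoef_recurrence:
  "21 \<le> n \<Longrightarrow> Acoef n = - 12 / (real n * real (n + 7)) * (\<Sum>k = 0..17. acoef k * Acoef (n - 4 - k))"
  by (subst Acoef.simps) (simp add: min_absorb2)

lemma Bcoef_recurrence:
  "21 \<le> n \<Longrightarrow> Bcoef n = - 12 / (real n * (real n - 7)) * (\<Sum>k = 0..17. acoef k * Bcoef (n - 4 - k))"
  by (subst Bcoef.simps) (simp add: min_absorb2)

lemma Acoef_bound_initial:
  assumes "1 \<le> n" "n < 22"
  shows "\<bar>Acoef n\<bar> \<le> 21 / 100 * (3 / 4) ^ n"
proof -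
  have "n \<in> {1..<22}" using assms by simp
  then show ?thesis by (auto simp: atLeastLessThan_nat_numeral power_divide)
qed

lemma Bcoef_bound_initial:
  assumes "1 \<le> n" "n < 22"
  shows "\<bar>Bcoef n\<bar> \<le> 85 / 100 * (3 / 4) ^ n"
proof -
  have "n \<in> {1..<22}" using assms by simp
  then show ?thesis by (auto simp: atLeastLessThan_nat_numeral power_divide)
qed

lemma Acoef_bound:
  assumes "1 \<le> n"
  shows "\<bar>Acoef n\<bar> \<le> 21 / 100 * (3 / 4) ^ n"
proof (rule convolution_recurrence_geometric_bound
    [where K = 17 and N = 22 and a = acoef and \<mu> = "\<lambda>n. - 12 / (real n * real (n + 7))"])
  fix m :: nat
  assume "22 \<le> m"
  then show "Acoef m = - 12 / (real m * real (m + 7)) * (\<Sum>k = 0..17. acoef k * Acoef (m - 4 - k))"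
    by (intro Acoef_recurrence) simp
  have "(22 :: real) * 29 \<le> real m * real (m + 7)"
    using \<open>22 \<le> m\<close> by (intro mult_mono) auto
  then show "\<bar>- 12 / (real m * real (m + 7))\<bar> * (\<Sum>k = 0..17. \<bar>acoef k\<bar> / (3 / 4) ^ (k + 4)) \<le> 1"
    by (intro acoef_multiplier_small) simp
qed (use assms Acoef_bound_initial in auto)

lemma Bcoef_bound:
  assumes "1 \<le> n"
  shows "\<bar>Bcoef n\<bar> \<le> 85 / 100 * (3 / 4) ^ n"
proof (rule convolution_recurrence_geometric_bound
    [where K = 17 and N = 22 and a = acoef and \<mu> = "\<lambda>n. - 12 / (real n * (real n - 7))"])
  fix m :: nat
  assume "22 \<le> m"
  then show "Bcoef m = - 12 / (real m * (real m - 7)) * (\<Sum>k = 0..17. acoef k * Bcoef (m - 4 - k))"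
    by (intro Bcoef_recurrence) simp
  have "(22 :: real) * 15 \<le> real m * (real m - 7)"
    using \<open>22 \<le> m\<close> by (intro mult_mono) auto
  then show "\<bar>- 12 / (real m * (real m - 7))\<bar> * (\<Sum>k = 0..17. \<bar>acoef k\<bar> / (3 / 4) ^ (k + 4)) \<le> 1"
    by (intro acoef_multiplier_small) simp
qed (use assms Bcoef_bound_initial in auto)

theorem lemma6p5:
  fixes n :: nat
  assumes "n \<ge> 1"
  shows "\<bar>Acoef n\<bar> \<le> 21 / 100 * (3 / 4) ^ n \<and> \<bar>Bcoef n\<bar> \<le> 85 / 100 * (3 / 4) ^ n"
  using Acoef_bound[OF assms] Bcoef_bound[OF assms] ..

end
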